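(* Let $\Omega$ be a Polish space, $\mathcal{Q}$ a nonempty convex subset of $\mathfrak{P}(\Omega)$, and $Y:\Omega\to\mathbb{R}^d$ a universally measurable random variable. Assume that the one-period condition $NA(\mathcal{Q})$ holds. Then there exists $\hat p\in\mathcal{Q}$ such that $0\in\mathrm{Ri}\bigl(\mathrm{Conv}(E(\hat p))\bigr)$ and $\mathrm{Aff}(E(\hat p))=\mathrm{Aff}(D)$.
   Context: $\mathfrak{P}(\Omega)$ is the set of Borel probability measures on $\Omega$, each identified with its extension to the universally measurable sets. For $p\in\mathcal{Q}$, $E(p)$ is the intersection of all closed sets $A\subseteq\mathbb{R}^d$ with $p[Y\in A]=1$, and $D$ is the intersection of all closed sets $A\subseteq\mathbb{R}^d$ with $q[Y\in A]=1$ for all $q\in\mathcal{Q}$. A property holds $\mathcal{Q}$-quasi-surely if it holds outside a universally measurable set that is $q$-null for every $q\in\mathcal{Q}$. $NA(\mathcal{Q})$: for every $h\in\mathbb{R}^d$, $h\cdot Y\ge0$ $\mathcal{Q}$-q.s. implies $h\cdot Y=0$ $\mathcal{Q}$-q.s. $\mathrm{Aff}$, $\mathrm{Conv}$ denote affine and convex hulls, and $\mathrm{Ri}$ the relative interior. *)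

theory Defs
  imports "HOL-Probability.Probability"
begin

definition borel_probs :: "'a::topological_space measure set" where
  "borel_probs = {M. sets M = sets (borel :: 'a measure) \<and> prob_space M}"

definition univ_measurable_sets :: "'a::topological_space set set" where
  "univ_measurable_sets = {A. \<forall>p\<in>borel_probs. A \<in> sets (completion p)}"

definition univ_measurable_fun :: "('a::topological_space \<Rightarrow> 'b::topological_space) \<Rightarrow> bool" where
  "univ_measurable_fun Y \<longleftrightarrow> (\<forall>B\<in>sets (borel :: 'b measure). Y -` B \<in> univ_measurable_sets)"

text \<open>Value of (the extension to universally measurable sets of) p.\<close>
definition uprob :: "'a::topological_space measure \<Rightarrow> 'a set \<Rightarrow> real" where
  "uprob p A = measure (completion p) A"

definition convex_measures :: "'a::topological_space measure set \<Rightarrow> bool" where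
  "convex_measures Q \<longleftrightarrow> (\<forall>p\<in>Q. \<forall>q\<in>Q. \<forall>t::real. 0 \<le> t \<and> t \<le> 1 \<longrightarrow>
     (\<exists>r\<in>Q. \<forall>A\<in>sets (borel :: 'a measure).
        measure r A = t * measure p A + (1 - t) * measure q A))"

definition quasi_surely :: "'a::topological_space measure set \<Rightarrow> ('a \<Rightarrow> bool) \<Rightarrow> bool" where
  "quasi_surely Q P \<longleftrightarrow> (\<exists>N\<in>univ_measurable_sets. (\<forall>q\<in>Q. uprob q N = 0) \<and>
      (\<forall>\<omega>. \<omega> \<notin> N \<longrightarrow> P \<omega>))"

definition supp_E :: "('a::topological_space \<Rightarrow> 'b::topological_space) \<Rightarrow> 'a measure \<Rightarrow> 'b set" where
  "supp_E Y p = \<Inter>{A. closed A \<and> uprob p (Y -` A) = 1}"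

definition supp_D :: "('a::topological_space \<Rightarrow> 'b::topological_space) \<Rightarrow> 'a measure set \<Rightarrow> 'b set" where
  "supp_D Y Q = \<Inter>{A. closed A \<and> (\<forall>q\<in>Q. uprob q (Y -` A) = 1)}"

definition NA :: "'a::topological_space measure set \<Rightarrow> ('a \<Rightarrow> 'b::euclidean_space) \<Rightarrow> bool" where
  "NA Q Y \<longleftrightarrow> (\<forall>h::'b. quasi_surely Q (\<lambda>\<omega>. h \<bullet> Y \<omega> \<ge> 0) \<longrightarrow>
                       quasi_surely Q (\<lambda>\<omega>. h \<bullet> Y \<omega> = 0))"

end

theory Submission
  imports Defs
begin

text \<open>Let \<open>S\<close> be the union of the supports \<open>E(q)\<close>, \<open>q \<in> Q\<close>. Applied to half-spaces, \<open>NA(Q)\<close>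
  says that every linear functional that is nonnegative on \<open>S\<close> vanishes on \<open>S\<close>, so by
  separation \<open>0\<close> is a relative interior point of \<open>Conv(S)\<close>. This is certified by finitely
  many points of \<open>S\<close>; since supports only grow under mixing, convexity of \<open>Q\<close> yields a single
  \<open>p \<in> Q\<close> whose support contains them all. Then \<open>E(p)\<close> inherits the relative interior
  property and the affine hull of \<open>S\<close>, which is that of \<open>D = closure S\<close>.\<close>

lemma zero_in_rel_interior_convex_hullI:
  fixes S :: "'a::euclidean_space set"
  assumes "S \<noteq> {}"
    and no_support: "\<And>h. \<forall>x\<in>S. 0 \<le> h \<bullet> x \<Longrightarrow> \<forall>x\<in>S. h \<bullet> x = 0"
  shows "0 \<in> rel_interior (convex hull S)"
proof (rule ccontr)
  let ?C = "convex hull S"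
  assume "0 \<notin> rel_interior ?C"
  moreover have "convex (rel_interior ?C)" "rel_interior ?C \<noteq> {}"
    using \<open>S \<noteq> {}\<close> by (auto simp: convex_rel_interior rel_interior_eq_empty)
  ultimately obtain a where a: "a \<in> span (rel_interior ?C)" "a \<noteq> 0"
    and a_nonneg: "\<And>x. x \<in> rel_interior ?C \<Longrightarrow> 0 \<le> a \<bullet> x"
    using separating_hyperplane_set_0_inspan by blast
  have "closure (rel_interior ?C) \<subseteq> {x. 0 \<le> a \<bullet> x}"
    using a_nonneg by (intro closure_minimal) (auto simp: closed_halfspace_ge[of 0 a, simplified])
  then have "S \<subseteq> {x. 0 \<le> a \<bullet> x}"
    using convex_closure_rel_interior[of ?C] hull_subset[of S convex] closure_subset[of ?C]
    by auto
  then have "S \<subseteq> {x. a \<bullet> x = 0}"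
    using no_support by auto
  then have "?C \<subseteq> {x. a \<bullet> x = 0}"
    by (intro hull_minimal) (auto simp: convex_hyperplane)
  then have "span (rel_interior ?C) \<subseteq> {x. a \<bullet> x = 0}"
    using rel_interior_subset by (intro span_minimal) (auto simp: subspace_hyperplane)
  with a show False by auto
qed

text \<open>The witness is an affine basis \<open>B\<close> of \<open>S\<close> together with, for each \<open>b \<in> B\<close>, finitely
  many points of \<open>S\<close> whose convex hull contains a negative multiple of \<open>b\<close>.\<close>

lemma rel_interior_convex_hull_finite_witness:
  fixes S :: "'a::euclidean_space set"
  assumes zero_ri: "0 \<in> rel_interior (convex hull S)"
  obtains T where "finite T" "T \<subseteq> S"
    "\<And>U. T \<subseteq> U \<Longrightarrow> U \<subseteq> S \<Longrightarrow>
       0 \<in> rel_interior (convex hull U) \<and> affine hull U = affine hull S"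
proof -
  obtain B where B: "B \<subseteq> S" "\<not> affine_dependent B" "affine hull S = affine hull B"
    using affine_basis_exists by blast
  have "0 \<in> affine hull S"
    using zero_ri rel_interior_subset convex_hull_subset_affine_hull by blast
  then have span_B: "affine hull S = span B"
    using B(3) affine_hull_span_0 by metis
  have "\<exists>F. finite F \<and> F \<subseteq> S \<and> (\<exists>t>0. - (t *\<^sub>R b) \<in> convex hull F)" if "b \<in> B" for b
  proof -
    have "b \<in> affine hull (convex hull S)"
      using that B(1) hull_subset[of S affine] by (auto simp: affine_hull_convex_hull)
    then obtain e where "e > 1" "(1 - e) *\<^sub>R b \<in> convex hull S"
      using convex_rel_interior_if2[OF convex_convex_hull zero_ri] by auto
    moreover obtain F where "finite F" "F \<subseteq> S" "(1 - e) *\<^sub>R b \<in> convex hull F"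
      using caratheodory[of S] \<open>(1 - e) *\<^sub>R b \<in> convex hull S\<close> by blast
    moreover have "(1 - e) *\<^sub>R b = - ((e - 1) *\<^sub>R b)"
      by (simp add: algebra_simps)
    ultimately show ?thesis
      by (metis diff_gt_0_iff_gt)
  qed
  then obtain F where F: "\<And>b. b \<in> B \<Longrightarrow> finite (F b) \<and> F b \<subseteq> S \<and> (\<exists>t>0. - (t *\<^sub>R b) \<in> convex hull F b)"
    by metis
  define T where "T = B \<union> (\<Union>b\<in>B. F b)"
  have "finite T" "T \<subseteq> S"
    using aff_independent_finite[OF B(2)] B(1) F unfolding T_def by auto
  moreover have "0 \<in> rel_interior (convex hull U) \<and> affine hull U = affine hull S"
    if TU: "T \<subseteq> U" and US: "U \<subseteq> S" for U
  proof
    have "affine hull S \<subseteq> affine hull U"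
      using B(3) TU hull_mono[of B U] unfolding T_def by auto
    then show aff_U: "affine hull U = affine hull S"
      using hull_mono[OF US] by auto
    have "B \<noteq> {}"
      using zero_ri B(3) by auto
    then show "0 \<in> rel_interior (convex hull U)"
    proof (intro zero_in_rel_interior_convex_hullI)
      fix h assume h_nonneg: "\<forall>x\<in>U. 0 \<le> h \<bullet> x"
      then have h_nonneg_hull: "convex hull U \<subseteq> {x. 0 \<le> h \<bullet> x}"
        by (intro hull_minimal) (auto simp: convex_halfspace_ge)
      have "h \<bullet> b = 0" if b: "b \<in> B" for b
      proof -
        obtain t where "t > 0" "- (t *\<^sub>R b) \<in> convex hull F b"
          using F[OF b] by blast
        moreover have "convex hull F b \<subseteq> convex hull U"
          using b TU unfolding T_def by (intro hull_mono) auto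
        ultimately have "t * (h \<bullet> b) \<le> 0"
          using h_nonneg_hull by fastforce
        moreover have "0 \<le> h \<bullet> b"
          using h_nonneg b TU unfolding T_def by auto
        ultimately show ?thesis
          using \<open>t > 0\<close> by (simp add: mult_le_0_iff)
      qed
      then have "span B \<subseteq> {x. h \<bullet> x = 0}"
        by (intro span_minimal) (auto simp: subspace_hyperplane)
      then show "\<forall>x\<in>U. h \<bullet> x = 0"
        using aff_U span_B hull_subset[of U affine] by auto
    qed (use TU \<open>B \<noteq> {}\<close> in \<open>auto simp: T_def\<close>)
  qed
  ultimately show ?thesis
    using that by blast
qed

lemma borel_probs_space: "p \<in> borel_probs \<Longrightarrow> space p = UNIV"
  unfolding borel_probs_def by (auto dest: sets_eq_imp_space_eq)

lemma prob_space_completion_borel_probs: "p \<in> borel_probs \<Longrightarrow> prob_space (completion p)"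
  unfolding borel_probs_def using prob_space.prob_space_completion by blast

lemma uprob_eq_0_iff:
  assumes "p \<in> borel_probs" "X \<in> sets (completion p)"
  shows "uprob p X = 0 \<longleftrightarrow> X \<in> null_sets (completion p)"
proof -
  interpret prob_space "completion p"
    using prob_space_completion_borel_probs[OF assms(1)] .
  show ?thesis
    unfolding uprob_def using assms(2) by (auto simp: emeasure_eq_measure null_sets_def)
qed

lemma univ_measurable_fun_preimage:
  "univ_measurable_fun Y \<Longrightarrow> B \<in> sets borel \<Longrightarrow> p \<in> borel_probs \<Longrightarrow> Y -` B \<in> sets (completion p)"
  unfolding univ_measurable_fun_def univ_measurable_sets_def by auto

lemma uprob_preimage_eq_1_iff:
  assumes p: "p \<in> borel_probs" and Y: "univ_measurable_fun Y" and "A \<in> sets borel"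
  shows "uprob p (Y -` A) = 1 \<longleftrightarrow> Y -` (- A) \<in> null_sets (completion p)"
proof -
  interpret prob_space "completion p"
    using prob_space_completion_borel_probs[OF p] .
  have A: "Y -` A \<in> sets (completion p)"
    using univ_measurable_fun_preimage[OF Y \<open>A \<in> sets borel\<close> p] .
  have compl: "Y -` (- A) = space (completion p) - Y -` A"
    using borel_probs_space[OF p] by auto
  then have "uprob p (Y -` (- A)) = 1 - uprob p (Y -` A)"
    unfolding uprob_def using prob_compl[OF A] by simp
  moreover have "Y -` (- A) \<in> sets (completion p)"
    using A compl by auto
  ultimately show ?thesis
    using uprob_eq_0_iff[OF p \<open>Y -` (- A) \<in> sets (completion p)\<close>] by auto
qed

text \<open>The complement of the support is a union of open sets with null preimage; by second
  countability (Lindelof) countably many of them suffice.\<close>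

lemma supp_E_preimage_compl_null:
  fixes Y :: "'a::topological_space \<Rightarrow> 'b::second_countable_topology"
  assumes p: "p \<in> borel_probs" and Y: "univ_measurable_fun Y"
  shows "Y -` (- supp_E Y p) \<in> null_sets (completion p)"
proof -
  define F where "F = {- A | A. closed A \<and> uprob p (Y -` A) = 1}"
  obtain F' where F': "F' \<subseteq> F" "countable F'" "\<Union>F' = \<Union>F"
    using Lindelof[of F] unfolding F_def by auto
  have "(\<Union>U\<in>F'. Y -` U) \<in> null_sets (completion p)"
  proof (rule null_sets_UN'[OF F'(2)])
    fix U assume "U \<in> F'"
    then obtain A where "U = - A" "closed A" "uprob p (Y -` A) = 1"
      using F'(1) unfolding F_def by auto
    then show "Y -` U \<in> null_sets (completion p)"
      using uprob_preimage_eq_1_iff[OF p Y borel_closed] by auto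
  qed
  moreover have "- supp_E Y p = \<Union>F"
    unfolding F_def supp_E_def by auto
  ultimately show ?thesis
    using F'(3) by (metis vimage_UN vimage_Union)
qed

lemma closed_supp_E: "closed (supp_E Y p)"
  unfolding supp_E_def by auto

lemma supp_E_subset_iff:
  fixes Y :: "'a::topological_space \<Rightarrow> 'b::second_countable_topology"
  assumes p: "p \<in> borel_probs" and Y: "univ_measurable_fun Y" and "closed A"
  shows "supp_E Y p \<subseteq> A \<longleftrightarrow> uprob p (Y -` A) = 1"
proof
  assume "supp_E Y p \<subseteq> A"
  then have "Y -` (- A) \<subseteq> Y -` (- supp_E Y p)"
    by auto
  then show "uprob p (Y -` A) = 1"
    using supp_E_preimage_compl_null[OF p Y] null_sets_completion_subset
      uprob_preimage_eq_1_iff[OF p Y borel_closed[OF \<open>closed A\<close>]] by blast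
qed (use \<open>closed A\<close> in \<open>auto simp: supp_E_def\<close>)

lemma supp_E_nonempty:
  fixes Y :: "'a::topological_space \<Rightarrow> 'b::second_countable_topology"
  assumes p: "p \<in> borel_probs" and Y: "univ_measurable_fun Y"
  shows "supp_E Y p \<noteq> {}"
proof
  interpret prob_space "completion p"
    using prob_space_completion_borel_probs[OF p] .
  assume "supp_E Y p = {}"
  then have "UNIV \<in> null_sets (completion p)"
    using supp_E_preimage_compl_null[OF p Y] \<open>supp_E Y p = {}\<close> by simp
  then show False
    using borel_probs_space[OF p] emeasure_space_1 by (auto simp: null_sets_def)
qed

lemma null_sets_mixture:
  assumes p: "p \<in> borel_probs" and r: "r \<in> borel_probs"
    and mix: "\<forall>A\<in>sets borel. measure r A = t * measure p A + (1 - t) * measure q A"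
    and t: "0 < t" "t \<le> 1"
    and N: "N \<in> null_sets r"
  shows "N \<in> null_sets p"
proof -
  interpret prob_space p
    using p unfolding borel_probs_def by auto
  have N_borel: "N \<in> sets borel" "N \<in> sets p"
    using N p r unfolding borel_probs_def by auto
  have "t * measure p N + (1 - t) * measure q N = 0"
    using mix N_borel N by (auto simp: measure_def null_sets_def)
  moreover have "0 \<le> t * measure p N" "0 \<le> (1 - t) * measure q N"
    using t by simp_all
  ultimately have "t * measure p N = 0"
    by linarith
  then have "measure p N = 0"
    using t by simp
  then show ?thesis
    using N_borel by (simp add: emeasure_eq_measure null_sets_def)
qed

lemma supp_E_mixture_mono:
  fixes Y :: "'a::topological_space \<Rightarrow> 'b::second_countable_topology"
  assumes p: "p \<in> borel_probs" and r: "r \<in> borel_probs" and Y: "univ_measurable_fun Y"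
    and mix: "\<forall>A\<in>sets borel. measure r A = t * measure p A + (1 - t) * measure q A"
    and t: "0 < t" "t \<le> 1"
  shows "supp_E Y p \<subseteq> supp_E Y r"
proof -
  have "Y -` (- supp_E Y r) \<in> null_sets (completion r)"
    using supp_E_preimage_compl_null[OF r Y] .
  then have "Y -` (- supp_E Y r) \<in> null_sets (completion p)"
    using null_sets_mixture[OF p r mix t] unfolding null_sets_completion_iff2 by blast
  then show ?thesis
    using supp_E_subset_iff[OF p Y closed_supp_E]
      uprob_preimage_eq_1_iff[OF p Y borel_closed[OF closed_supp_E]] by blast
qed

lemma finite_subset_supp_E_mixture:
  fixes Y :: "'a::topological_space \<Rightarrow> 'b::second_countable_topology"
  assumes Q: "Q \<noteq> {}" "Q \<subseteq> borel_probs" "convex_measures Q" and Y: "univ_measurable_fun Y"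
    and "finite T" "T \<subseteq> (\<Union>q\<in>Q. supp_E Y q)"
  shows "\<exists>p\<in>Q. T \<subseteq> supp_E Y p"
  using \<open>finite T\<close> \<open>T \<subseteq> (\<Union>q\<in>Q. supp_E Y q)\<close>
proof (induction T rule: finite_induct)
  case empty
  then show ?case
    using Q(1) by blast
next
  case (insert x T)
  then obtain p q where pq: "p \<in> Q" "T \<subseteq> supp_E Y p" "q \<in> Q" "x \<in> supp_E Y q"
    by auto
  moreover have "0 \<le> (1/2 :: real)" "(1/2 :: real) \<le> 1"
    by simp_all
  ultimately obtain r where r: "r \<in> Q"
    and mix: "\<forall>A\<in>sets borel. measure r A = 1/2 * measure p A + (1 - 1/2) * measure q A"
    using Q(3) unfolding convex_measures_def by blast
  then have mix': "\<forall>A\<in>sets borel. measure r A = 1/2 * measure q A + (1 - 1/2) * measure p A"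
    by auto
  have "supp_E Y p \<subseteq> supp_E Y r" "supp_E Y q \<subseteq> supp_E Y r"
    using supp_E_mixture_mono[OF _ _ Y mix] supp_E_mixture_mono[OF _ _ Y mix'] pq r Q(2)
    by auto
  with pq r show ?case
    by blast
qed

lemma quasi_surely_preimage_closed_iff:
  fixes Y :: "'a::topological_space \<Rightarrow> 'b::second_countable_topology"
  assumes Q: "Q \<subseteq> borel_probs" and Y: "univ_measurable_fun Y" and "closed A"
  shows "quasi_surely Q (\<lambda>\<omega>. Y \<omega> \<in> A) \<longleftrightarrow> (\<forall>q\<in>Q. supp_E Y q \<subseteq> A)"
proof
  assume "quasi_surely Q (\<lambda>\<omega>. Y \<omega> \<in> A)"
  then obtain N where N: "N \<in> univ_measurable_sets" "\<forall>q\<in>Q. uprob q N = 0" "Y -` (- A) \<subseteq> N"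
    unfolding quasi_surely_def by auto
  show "\<forall>q\<in>Q. supp_E Y q \<subseteq> A"
  proof
    fix q assume "q \<in> Q"
    then have "N \<in> null_sets (completion q)"
      using N Q uprob_eq_0_iff unfolding univ_measurable_sets_def by blast
    then show "supp_E Y q \<subseteq> A"
      using N(3) \<open>q \<in> Q\<close> Q null_sets_completion_subset supp_E_subset_iff[OF _ Y \<open>closed A\<close>]
        uprob_preimage_eq_1_iff[OF _ Y borel_closed[OF \<open>closed A\<close>]] by blast
  qed
next
  assume supp: "\<forall>q\<in>Q. supp_E Y q \<subseteq> A"
  have "Y -` (- A) \<in> univ_measurable_sets"
    using Y \<open>closed A\<close> unfolding univ_measurable_fun_def by auto
  moreover have "uprob q (Y -` (- A)) = 0" if "q \<in> Q" for q
  proof -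
    have "Y -` (- A) \<in> null_sets (completion q)"
      using that supp Q supp_E_subset_iff[OF _ Y \<open>closed A\<close>]
        uprob_preimage_eq_1_iff[OF _ Y borel_closed[OF \<open>closed A\<close>]] by blast
    then show ?thesis
      unfolding uprob_def by (auto simp: measure_def null_sets_def)
  qed
  ultimately show "quasi_surely Q (\<lambda>\<omega>. Y \<omega> \<in> A)"
    unfolding quasi_surely_def by auto
qed

lemma supp_D_eq_closure_Union_supp_E:
  fixes Y :: "'a::topological_space \<Rightarrow> 'b::second_countable_topology"
  assumes Q: "Q \<subseteq> borel_probs" and Y: "univ_measurable_fun Y"
  shows "supp_D Y Q = closure (\<Union>q\<in>Q. supp_E Y q)"
proof
  have "uprob q (Y -` closure (\<Union>q\<in>Q. supp_E Y q)) = 1" if "q \<in> Q" for q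
    using that Q supp_E_subset_iff[OF _ Y closed_closure] closure_subset by blast
  then show "supp_D Y Q \<subseteq> closure (\<Union>q\<in>Q. supp_E Y q)"
    unfolding supp_D_def by auto
  have "supp_E Y q \<subseteq> supp_D Y Q" if "q \<in> Q" for q
    using that unfolding supp_E_def supp_D_def by auto
  moreover have "closed (supp_D Y Q)"
    unfolding supp_D_def by auto
  ultimately show "closure (\<Union>q\<in>Q. supp_E Y q) \<subseteq> supp_D Y Q"
    by (intro closure_minimal) auto
qed

lemma NA_supp_E_no_support:
  fixes Y :: "'a::topological_space \<Rightarrow> 'b::euclidean_space"
  assumes Q: "Q \<subseteq> borel_probs" and Y: "univ_measurable_fun Y" and "NA Q Y"
    and h_nonneg: "\<forall>x\<in>(\<Union>q\<in>Q. supp_E Y q). 0 \<le> h \<bullet> x"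
  shows "\<forall>x\<in>(\<Union>q\<in>Q. supp_E Y q). h \<bullet> x = 0"
proof -
  have "quasi_surely Q (\<lambda>\<omega>. Y \<omega> \<in> {y. 0 \<le> h \<bullet> y})"
    using h_nonneg quasi_surely_preimage_closed_iff[OF Q Y closed_halfspace_ge[of 0 h]] by auto
  then have "quasi_surely Q (\<lambda>\<omega>. Y \<omega> \<in> {y. h \<bullet> y = 0})"
    using \<open>NA Q Y\<close> unfolding NA_def by simp
  then show ?thesis
    using quasi_surely_preimage_closed_iff[OF Q Y closed_hyperplane[of h 0]] by auto
qed

theorem proposition4:
  fixes Q :: "'a::polish_space measure set"
    and Y :: "'a \<Rightarrow> real ^ 'd"
  assumes "Q \<noteq> {}" and "Q \<subseteq> borel_probs" and "convex_measures Q"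
    and "univ_measurable_fun Y"
    and "NA Q Y"
  shows "\<exists>p\<in>Q. 0 \<in> rel_interior (convex hull (supp_E Y p))
            \<and> affine hull (supp_E Y p) = affine hull (supp_D Y Q)"
proof -
  define S where "S = (\<Union>q\<in>Q. supp_E Y q)"
  have "S \<noteq> {}"
    using assms(1,2,4) supp_E_nonempty unfolding S_def by blast
  then have "0 \<in> rel_interior (convex hull S)"
    using NA_supp_E_no_support[OF assms(2,4,5)] unfolding S_def
    by (intro zero_in_rel_interior_convex_hullI) auto
  then obtain T where "finite T" "T \<subseteq> S"
    and witness: "\<And>U. T \<subseteq> U \<Longrightarrow> U \<subseteq> S \<Longrightarrow>
       0 \<in> rel_interior (convex hull U) \<and> affine hull U = affine hull S"
    using rel_interior_convex_hull_finite_witness by blast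
  then obtain p where "p \<in> Q" "T \<subseteq> supp_E Y p"
    using finite_subset_supp_E_mixture[OF assms(1-4)] unfolding S_def by blast
  moreover have "supp_E Y p \<subseteq> S"
    using \<open>p \<in> Q\<close> unfolding S_def by auto
  moreover have "affine hull S = affine hull (supp_D Y Q)"
    using supp_D_eq_closure_Union_supp_E[OF assms(2,4)] unfolding S_def by simp
  ultimately show ?thesis
    using witness by metis
qed

end
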